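(* Let $\phi$ be an $N$-affine equivariant additive integrator map satisfying the consistency condition $\phi(hf^{[1]},\ldots,hf^{[N]})=hf+o(h)$ as $h\to0$, where $f=f^{[1]}+\cdots+f^{[N]}$. If $f^{[\nu]}$ is a constant vector field for every $\nu=1,\ldots,N$, then $\phi(f^{[1]},\ldots,f^{[N]})=f$.
   Context: All spaces are real Banach spaces; $\mathfrak X(Y)$ denotes smooth vector fields on $Y$. For fixed $N$, an additive integrator map $\phi$ is a collection of smooth maps $\phi_Y\colon\mathfrak X(Y)^N\to\mathfrak X(Y)$, one per Banach space $Y$. For Gâteaux differentiable $\chi$, $f\sim_\chi g$ means $\chi'(y)f(y)=g(\chi(y))$ for all $y$. $\phi$ is $N$-affine equivariant if for every affine map $A$ between Banach spaces, $f^{[\nu]}\sim_A g^{[\nu]}$ for all $\nu$ implies $\phi(f^{[1]},\ldots,f^{[N]})\sim_A\phi(g^{[1]},\ldots,g^{[N]})$. *)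

theory Defs
  imports "HOL-Analysis.Analysis"
begin

text \<open>Bounded n-linear maps are represented as functions of an argument sequence
  v :: nat \<Rightarrow> 'a, of which only the entries v 0, ..., v (n-1) matter.\<close>

definition multilin_bounded :: "nat \<Rightarrow> ((nat \<Rightarrow> 'a::real_normed_vector) \<Rightarrow> 'b::real_normed_vector) \<Rightarrow> bool" where
  "multilin_bounded n M \<longleftrightarrow>
     (\<forall>i<n. \<forall>v. linear (\<lambda>w. M (v(i := w)))) \<and>
     (\<forall>v. M v = M (\<lambda>i. if i < n then v i else 0)) \<and>
     (\<exists>K. \<forall>v. norm (M v) \<le> K * (\<Prod>i<n. norm (v i)))"

definition mlnorm :: "nat \<Rightarrow> ((nat \<Rightarrow> 'a::real_normed_vector) \<Rightarrow> 'b::real_normed_vector) \<Rightarrow> real" where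
  "mlnorm n M = (SUP v\<in>{v. \<forall>i<n. norm (v i) \<le> 1}. norm (M v))"

text \<open>Smooth (C-infinity) maps between normed spaces: Frechet differentiable of all
  orders, D n x being the n-th derivative at x (a bounded n-linear map), and D (Suc n)
  being the Frechet derivative of x \<mapsto> D n x in operator norm.\<close>

definition smooth :: "('a::real_normed_vector \<Rightarrow> 'b::real_normed_vector) \<Rightarrow> bool" where
  "smooth f \<longleftrightarrow> (\<exists>D :: nat \<Rightarrow> 'a \<Rightarrow> (nat \<Rightarrow> 'a) \<Rightarrow> 'b.
      (\<forall>x v. D 0 x v = f x) \<and>
      (\<forall>n x. multilin_bounded n (D n x)) \<and>
      (\<forall>n x. ((\<lambda>y. mlnorm n (\<lambda>v. D n y v - D n x v - D (Suc n) x (v(n := y - x))) / norm (y - x))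
               \<longlongrightarrow> 0) (at x)))"

definition affine_map :: "('a::real_normed_vector \<Rightarrow> 'b::real_normed_vector) \<Rightarrow> bool" where
  "affine_map A \<longleftrightarrow> (\<exists>L b. bounded_linear L \<and> A = (\<lambda>y. L y + b))"

text \<open>f \<sim>_\<chi> g : \<chi>'(y) f(y) = g(\<chi>(y)) for all y, with \<chi>'(y) the Gateaux derivative,
  i.e. the directional derivative of \<chi> at y in direction f(y) exists and equals g(\<chi>(y)).\<close>

definition vf_related :: "('a::real_normed_vector \<Rightarrow> 'b::real_normed_vector) \<Rightarrow> ('a \<Rightarrow> 'a) \<Rightarrow> ('b \<Rightarrow> 'b) \<Rightarrow> bool" where
  "vf_related C f g \<longleftrightarrow>
     (\<forall>y. ((\<lambda>t. (C (y + t *\<^sub>R f y) - C y) /\<^sub>R t) \<longlongrightarrow> g (C y)) (at 0))"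

end

theory Submission
  imports Defs
begin

text \<open>A translation relates every constant field to itself, and the dilation \<open>y \<mapsto> h y\<close>
  relates \<open>c\<close> to \<open>h c\<close>. Equivariance therefore makes \<open>\<phi>(c)\<close> translation invariant, i.e. a
  constant \<open>w\<close>, and gives \<open>\<phi>(h c)(0) = h w\<close>. The difference quotient of the consistency
  condition at \<open>0\<close> is then constantly \<open>w - (c\<^sub>1 + \<dots> + c\<^sub>N)\<close>, so this vector vanishes.\<close>

lemma multilin_bounded_zero: "multilin_bounded n (\<lambda>v. 0)"
  unfolding multilin_bounded_def by (auto intro: linear_zero exI[of _ 0])

lemma multilin_bounded_0_const: "multilin_bounded 0 (\<lambda>v. c)"
  unfolding multilin_bounded_def by (auto intro: exI[of _ "norm c"])

lemma mlnorm_zero: "mlnorm n (\<lambda>v :: nat \<Rightarrow> 'a::real_normed_vector. 0) = 0"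
proof -
  have "{v :: nat \<Rightarrow> 'a. \<forall>i<n. norm (v i) \<le> 1} \<noteq> {}"
    by (auto intro: exI[of _ "\<lambda>i. 0"])
  then show ?thesis
    unfolding mlnorm_def norm_zero by (rule cSUP_const)
qed

lemma smooth_const: "smooth (\<lambda>x. c)"
proof -
  define D :: "nat \<Rightarrow> 'a \<Rightarrow> (nat \<Rightarrow> 'a) \<Rightarrow> 'b" where "D = (\<lambda>n x v. if n = 0 then c else 0)"
  have "multilin_bounded n (D n x)" for n x
    by (cases n) (simp_all add: D_def multilin_bounded_0_const multilin_bounded_zero)
  moreover have "(\<lambda>v. D n y v - D n x v - D (Suc n) x (v(n := y - x))) = (\<lambda>v. 0)" for n x y
    by (simp add: D_def)
  ultimately show ?thesis
    unfolding smooth_def by (intro exI[of _ D]) (simp add: D_def mlnorm_zero)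
qed

lemma tendsto_at_eventually_const_iff:
  fixes x :: "'a::perfect_space" and a l :: "'b::t2_space"
  assumes "\<And>y. y \<noteq> x \<Longrightarrow> F y = a"
  shows "(F \<longlongrightarrow> l) (at x) \<longleftrightarrow> l = a"
proof -
  have "(F \<longlongrightarrow> a) (at x)"
    using assms by (intro tendsto_eventually) (auto simp: eventually_at_filter)
  then show ?thesis
    using tendsto_unique[OF at_neq_bot] by blast
qed

lemma vf_related_affine_iff:
  assumes "linear L"
  shows "vf_related (\<lambda>y. L y + b) f g \<longleftrightarrow> (\<forall>y. g (L y + b) = L (f y))"
proof -
  have "(L (y + t *\<^sub>R f y) + b - (L y + b)) /\<^sub>R t = L (f y)" if "t \<noteq> 0" for y t
    using that by (simp add: linear_add[OF assms] linear_cmul[OF assms])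
  then have "((\<lambda>t. (L (y + t *\<^sub>R f y) + b - (L y + b)) /\<^sub>R t) \<longlongrightarrow> g (L y + b)) (at 0)
      \<longleftrightarrow> g (L y + b) = L (f y)" for y
    by (intro tendsto_at_eventually_const_iff)
  then show ?thesis
    unfolding vf_related_def by simp
qed

lemma equivariant_transport_const_fields:
  fixes \<phi> :: "(nat \<Rightarrow> 'a::real_normed_vector \<Rightarrow> 'a) \<Rightarrow> 'a \<Rightarrow> 'a"
  assumes equivariant: "\<forall>A :: 'a \<Rightarrow> 'a. affine_map A \<longrightarrow>
        (\<forall>f g. (\<forall>\<nu><N. smooth (f \<nu>) \<and> smooth (g \<nu>) \<and> vf_related A (f \<nu>) (g \<nu>))
               \<longrightarrow> vf_related A (\<phi> f) (\<phi> g))"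
    and L: "bounded_linear L"
    and scales: "\<And>\<nu>. L (s *\<^sub>R c \<nu>) = t *\<^sub>R c \<nu>"
  shows "\<phi> (\<lambda>\<nu> x. t *\<^sub>R c \<nu>) (L y + b) = L (\<phi> (\<lambda>\<nu> x. s *\<^sub>R c \<nu>) y)"
proof -
  have "vf_related (\<lambda>y. L y + b) (\<phi> (\<lambda>\<nu> x. s *\<^sub>R c \<nu>)) (\<phi> (\<lambda>\<nu> x. t *\<^sub>R c \<nu>))"
  proof (rule equivariant[rule_format])
    show "affine_map (\<lambda>y. L y + b)"
      unfolding affine_map_def using L by blast
    show "smooth (\<lambda>x. s *\<^sub>R c \<nu>) \<and> smooth (\<lambda>x. t *\<^sub>R c \<nu>)
        \<and> vf_related (\<lambda>y. L y + b) (\<lambda>x. s *\<^sub>R c \<nu>) (\<lambda>x. t *\<^sub>R c \<nu>)" for \<nu>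
      using L scales by (simp add: smooth_const vf_related_affine_iff bounded_linear.linear)
  qed
  then show ?thesis
    using L by (simp add: vf_related_affine_iff bounded_linear.linear)
qed

theorem lemma4p8:
  fixes N :: nat
    and \<phi> :: "(nat \<Rightarrow> 'a::banach \<Rightarrow> 'a) \<Rightarrow> 'a \<Rightarrow> 'a"
    and c :: "nat \<Rightarrow> 'a"
  assumes maps_smooth: "\<forall>f. (\<forall>\<nu><N. smooth (f \<nu>)) \<longrightarrow> smooth (\<phi> f)"
    and equivariant: "\<forall>A :: 'a \<Rightarrow> 'a. affine_map A \<longrightarrow>
        (\<forall>f g. (\<forall>\<nu><N. smooth (f \<nu>) \<and> smooth (g \<nu>) \<and> vf_related A (f \<nu>) (g \<nu>))
               \<longrightarrow> vf_related A (\<phi> f) (\<phi> g))"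
    and consistent: "\<forall>f. (\<forall>\<nu><N. smooth (f \<nu>)) \<longrightarrow>
        (\<forall>y. ((\<lambda>h. (\<phi> (\<lambda>\<nu> x. h *\<^sub>R f \<nu> x) y - h *\<^sub>R (\<Sum>\<nu><N. f \<nu> y)) /\<^sub>R h) \<longlongrightarrow> 0) (at 0))"
  shows "\<phi> (\<lambda>\<nu> x. c \<nu>) = (\<lambda>x. \<Sum>\<nu><N. c \<nu>)"
proof -
  define w where "w = \<phi> (\<lambda>\<nu> x. c \<nu>) 0"
  have phi_const: "\<phi> (\<lambda>\<nu> x. c \<nu>) y = w" for y
    using equivariant_transport_const_fields[OF equivariant bounded_linear_ident,
        where s = 1 and t = 1 and y = 0 and b = y]
    by (simp add: w_def)
  have phi_scaled: "\<phi> (\<lambda>\<nu> x. h *\<^sub>R c \<nu>) 0 = h *\<^sub>R w" for h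
    using equivariant_transport_const_fields[OF equivariant bounded_linear_scaleR_right,
        where s = 1 and t = h and y = 0 and b = 0]
    by (simp add: w_def)
  have "((\<lambda>h. (\<phi> (\<lambda>\<nu> x. h *\<^sub>R c \<nu>) 0 - h *\<^sub>R (\<Sum>\<nu><N. c \<nu>)) /\<^sub>R h) \<longlongrightarrow> 0) (at 0)"
    using consistent[rule_format, of "\<lambda>\<nu> x. c \<nu>" 0] by (simp add: smooth_const)
  moreover have "(\<phi> (\<lambda>\<nu> x. h *\<^sub>R c \<nu>) 0 - h *\<^sub>R (\<Sum>\<nu><N. c \<nu>)) /\<^sub>R h = w - (\<Sum>\<nu><N. c \<nu>)"
    if "h \<noteq> 0" for h
    using that by (simp add: phi_scaled flip: scaleR_diff_right)
  ultimately have "w = (\<Sum>\<nu><N. c \<nu>)"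
    by (simp add: tendsto_at_eventually_const_iff)
  then show ?thesis
    using phi_const by (simp add: fun_eq_iff)
qed

end
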